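(* Let $r\ge1$ and $k\ge1$ be integers. If $\vec a,\vec b\in\mathcal H_{r,k}$ have disjoint support, i.e. $a_i\ne b_j$ for all $i,j$, then transforming $\vec a$ into $\vec b$ in the Hanoi game on $\mathcal H_{r,k}$ requires exactly $2^k-1$ moves. The same holds for $\vec a,\vec b\in\mathcal H^*_{r,k}$ with disjoint support in the Hanoi game on $\mathcal H^*_{r,k}$.
   Context: A Hanoi state is a finite sequence of nonnegative integers $\vec x=(x_1,\dots,x_k)$ with $x_i\ne x_{i-1}$ for all $i>1$. $\mathcal H_{r,k}$ is the set of Hanoi states in $\{0,1,\dots,r\}^k$, and $\mathcal H^*_{r,k}\subseteq\mathcal H_{r,k}$ is the set of proper Hanoi states, those with $x_1\ne0$. In the Hanoi game on $\mathcal H_{r,k}$ a state is transformed by moves of two types: (1) an adjustment changes $x_k$ to any other value in $\{0,1,\dots,r\}$ different from $x_{k-1}$ (if $k=1$, to any other value); (2) for $k\ge2$, an involution finds the longest final segment $(x_j,\dots,x_k)$ of $\vec x$ on which the entries alternate between the values $x_k$ and $x_{k-1}$, and swaps the values $x_k$ and $x_{k-1}$ throughout that segment (e.g. $(1,2,3,4)\mapsto(1,2,4,3)$, $(1,2,1,2)\mapsto(2,1,2,1)$). The Hanoi game on $\mathcal H^*_{r,k}$ is the same but all states involved must be proper (moves that would make $x_1=0$ are forbidden). The number of moves required is the minimum length of a sequence of moves transforming $\vec a$ into $\vec b$. *)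

theory Defs
  imports Main
begin

text \<open>States are lists of naturals; the paper's x_1,...,x_k is xs!0,...,xs!(k-1).\<close>

definition hanoi_states :: "nat \<Rightarrow> nat \<Rightarrow> nat list set" where
  "hanoi_states r k = {xs. length xs = k \<and> (\<forall>i<k. xs ! i \<le> r) \<and>
       (\<forall>i. 0 < i \<and> i < k \<longrightarrow> xs ! i \<noteq> xs ! (i - 1))}"

definition proper_hanoi_states :: "nat \<Rightarrow> nat \<Rightarrow> nat list set" where
  "proper_hanoi_states r k = {xs \<in> hanoi_states r k. xs ! 0 \<noteq> 0}"

definition adjustment :: "nat \<Rightarrow> nat list \<Rightarrow> nat list \<Rightarrow> bool" where
  "adjustment r xs ys \<longleftrightarrow> (\<exists>v. length xs \<ge> 1 \<and> v \<le> r \<and> v \<noteq> xs ! (length xs - 1) \<and>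
       (length xs \<ge> 2 \<longrightarrow> v \<noteq> xs ! (length xs - 2)) \<and>
       ys = xs[length xs - 1 := v])"

definition swap_val :: "nat \<Rightarrow> nat \<Rightarrow> nat \<Rightarrow> nat" where
  "swap_val p q x = (if x = p then q else if x = q then p else x)"

definition involution :: "nat list \<Rightarrow> nat list" where
  "involution xs = (let k = length xs; p = xs ! (k - 1); q = xs ! (k - 2);
      j = (LEAST j. \<forall>i. j \<le> i \<and> i < k \<longrightarrow> xs ! i \<in> {p, q})
    in take j xs @ map (swap_val p q) (drop j xs))"

definition hanoi_move :: "nat list set \<Rightarrow> nat \<Rightarrow> (nat list \<times> nat list) set" where
  "hanoi_move S r = {(xs, ys). xs \<in> S \<and> ys \<in> S \<and>
       (adjustment r xs ys \<or> (length xs \<ge> 2 \<and> ys = involution xs))}"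

definition min_moves :: "nat list set \<Rightarrow> nat \<Rightarrow> nat list \<Rightarrow> nat list \<Rightarrow> nat \<Rightarrow> bool" where
  "min_moves S r a b n \<longleftrightarrow> (a, b) \<in> (hanoi_move S r) ^^ n \<and>
       (\<forall>m<n. (a, b) \<notin> (hanoi_move S r) ^^ m)"

end

theory Submission
  imports Defs
begin

text \<open>
  Split a state of length \<open>k\<close> into its prefix \<open>butlast x\<close>, a state of length \<open>k - 1\<close>, and its last
  entry. An adjustment keeps the prefix, an involution moves the prefix by one move of the
  \<open>(k - 1)\<close>-game, and conversely every move of the prefix is realised by an involution after at
  most one adjustment. Hence a path of length \<open>j\<close> between prefixes lifts to one of length at most
  \<open>2 j + 1\<close>, and induction gives \<open>2^k - 1\<close> moves between disjoint states.

  For the lower bound follow a path starting at \<open>a\<close> and compare a truncation of \<open>a\<close> (its prefix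
  or the prefix of its involution) with a truncation of the current state: every move gained
  between the truncations costs an involution and an adjustment, and leaving
  \<open>{a, involution a}\<close> costs one further move. Disjoint states have disjoint truncations, so
  induction gives at least \<open>2 (2^(k-1) - 1) + 1\<close> moves.
\<close>

section \<open>Hanoi states and adjustments\<close>

abbreviation hanoi_game :: "nat \<Rightarrow> nat \<Rightarrow> (nat list \<times> nat list) set" where
  "hanoi_game r k \<equiv> hanoi_move (hanoi_states r k) r"

lemma hanoi_states_iff:
  "xs \<in> hanoi_states r k \<longleftrightarrow>
     length xs = k \<and> (\<forall>x\<in>set xs. x \<le> r) \<and> successively (\<noteq>) xs"
proof -
  have "(\<forall>i. 0 < i \<and> i < length xs \<longrightarrow> xs ! i \<noteq> xs ! (i - 1)) \<longleftrightarrow>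
        (\<forall>i. Suc i < length xs \<longrightarrow> xs ! i \<noteq> xs ! Suc i)"
    by (metis Suc_pred diff_Suc_1 zero_less_Suc)
  then show ?thesis
    unfolding hanoi_states_def successively_conv_nth by (auto simp: all_set_conv_all_nth)
qed

lemma butlast_in_hanoi_states:
  assumes "xs \<in> hanoi_states r k" "k \<ge> 2"
  shows "butlast xs \<in> hanoi_states r (k - 1)"
proof -
  have "xs \<noteq> []" using assms by (auto simp: hanoi_states_iff)
  then have "xs = butlast xs @ [last xs]" by simp
  then have "successively (\<noteq>) (butlast xs)"
    using assms by (metis hanoi_states_iff successively_append_iff)
  then show ?thesis using assms by (auto simp: hanoi_states_iff dest: in_set_butlastD)
qed

lemma snoc_in_hanoi_states:
  assumes "u \<in> hanoi_states r k" "u \<noteq> []" "t \<le> r" "t \<noteq> last u"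
  shows "u @ [t] \<in> hanoi_states r (Suc k)"
  using assms unfolding hanoi_states_iff by (auto simp: successively_append_iff)

lemma adjustment_iff:
  "adjustment r xs ys \<longleftrightarrow> xs \<noteq> [] \<and> (\<exists>v. v \<le> r \<and> v \<noteq> last xs \<and>
      (butlast xs \<noteq> [] \<longrightarrow> v \<noteq> last (butlast xs)) \<and> ys = butlast xs @ [v])"
proof (cases xs rule: rev_cases)
  case (snoc us u)
  have "us \<noteq> [] \<Longrightarrow> xs ! (length xs - 2) = last us"
    using snoc by (cases us rule: rev_cases) (auto simp: nth_append)
  moreover have "xs[length xs - 1 := v] = us @ [v]" for v
    using snoc by (simp add: list_update_append)
  moreover have "2 \<le> length xs \<longleftrightarrow> us \<noteq> []" using snoc by (cases us) auto
  ultimately show ?thesis using snoc by (auto simp: adjustment_def nth_append)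
qed (simp add: adjustment_def)

lemma adjustment_if_butlast_eq:
  assumes a: "a \<in> hanoi_states r k" and b: "b \<in> hanoi_states r k" and "k \<ge> 1"
    and same_base: "butlast a = butlast b" and "a \<noteq> b"
  shows "adjustment r a b"
proof -
  have ne: "a \<noteq> []" "b \<noteq> []" using a b \<open>k \<ge> 1\<close> by (auto simp: hanoi_states_iff)
  have b_eq: "b = butlast a @ [last b]" using ne same_base by simp
  have "last b \<noteq> last a" using \<open>a \<noteq> b\<close> ne same_base by (metis append_butlast_last_id)
  moreover have "last b \<le> r" using b ne by (auto simp: hanoi_states_iff)
  moreover have "butlast a \<noteq> [] \<longrightarrow> last b \<noteq> last (butlast a)"
  proof
    have "successively (\<noteq>) (butlast a @ [last b])" using b b_eq by (metis hanoi_states_iff)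
    then show "butlast a \<noteq> [] \<Longrightarrow> last b \<noteq> last (butlast a)"
      by (simp add: successively_append_iff)
  qed
  ultimately show ?thesis unfolding adjustment_iff using ne b_eq by blast
qed

lemma hanoi_move_cases:
  assumes "(x, y) \<in> hanoi_move S r"
  shows "x \<in> S" "y \<in> S" "x \<noteq> []" "y = involution x \<or> butlast y = butlast x"
  using assms unfolding hanoi_move_def adjustment_iff by auto

section \<open>The involution\<close>

lemma swap_val_simps [simp]:
  "swap_val b a a = b" "swap_val b a b = a" "swap_val a b (swap_val b a x) = x"
  by (auto simp: swap_val_def)

lemma swap_val_commute: "swap_val a b = swap_val b a"
  by (auto simp: swap_val_def fun_eq_iff)

lemma swap_val_in_pair: "x \<in> {a, b} \<Longrightarrow> swap_val b a x \<in> {a, b}"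
  by (auto simp: swap_val_def)

lemma involution_append_alternating:
  assumes zs: "set zs \<subseteq> {a, b}" and ys: "ys \<noteq> [] \<longrightarrow> last ys \<notin> {a, b}"
  shows "involution (ys @ zs @ [a, b]) = ys @ map (swap_val b a) zs @ [b, a]"
proof -
  define xs where "xs = ys @ zs @ [a, b]"
  have last2: "xs ! (length xs - 1) = b" "xs ! (length xs - 2) = a"
    by (simp_all add: xs_def nth_append numeral_2_eq_2)
  have suffix: "xs ! i \<in> {b, a}" if "length ys \<le> i" "i < length xs" for i
  proof -
    have "xs ! i = (zs @ [a, b]) ! (i - length ys)"
      unfolding xs_def using that(1) by (rule nth_append_right)
    also have "\<dots> \<in> set (zs @ [a, b])"
      using that by (intro nth_mem) (simp add: xs_def)
    finally have "xs ! i \<in> set (zs @ [a, b])" .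
    then show ?thesis using zs by auto
  qed
  have boundary: "xs ! (length ys - 1) \<notin> {b, a}" if "ys \<noteq> []"
    using that ys by (auto simp: xs_def nth_append last_conv_nth)
  have "(LEAST j. \<forall>i. j \<le> i \<and> i < length xs \<longrightarrow> xs ! i \<in> {b, a}) = length ys"
  proof (rule Least_equality)
    show "\<forall>i. length ys \<le> i \<and> i < length xs \<longrightarrow> xs ! i \<in> {b, a}"
      using suffix by blast
  next
    fix j assume j: "\<forall>i. j \<le> i \<and> i < length xs \<longrightarrow> xs ! i \<in> {b, a}"
    show "length ys \<le> j"
    proof (rule ccontr)
      assume "\<not> length ys \<le> j"
      then have "ys \<noteq> []" "j \<le> length ys - 1" "length ys - 1 < length xs"
        by (auto simp: xs_def)
      then show False using j boundary by blast
    qed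
  qed
  then show ?thesis
    unfolding involution_def Let_def xs_def[symmetric] last2 by (simp add: xs_def)
qed

lemma alternating_suffix_split:
  "\<exists>ys zs. ws = ys @ zs \<and> set zs \<subseteq> {a, b} \<and> (ys \<noteq> [] \<longrightarrow> last ys \<notin> {a, b})"
proof -
  define P where "P = (\<lambda>v. v \<in> {a, b})"
  define ys where "ys = rev (dropWhile P (rev ws))"
  define zs where "zs = rev (takeWhile P (rev ws))"
  have "ws = ys @ zs"
    unfolding ys_def zs_def by (metis rev_append rev_rev_ident takeWhile_dropWhile_id)
  moreover have "set zs \<subseteq> {a, b}"
    unfolding zs_def P_def by (auto dest: set_takeWhileD)
  moreover have "last ys \<notin> {a, b}" if "ys \<noteq> []"
  proof -
    have ne: "dropWhile P (rev ws) \<noteq> []" using that unfolding ys_def by simp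
    then have "last ys = hd (dropWhile P (rev ws))" unfolding ys_def by (simp add: last_rev)
    then show ?thesis using hd_dropWhile[OF ne] unfolding P_def by simp
  qed
  ultimately show ?thesis by blast
qed

lemma involution_decomp:
  assumes "successively (\<noteq>) xs" "2 \<le> length xs"
  obtains ys zs a b where "xs = ys @ zs @ [a, b]" "set zs \<subseteq> {a, b}"
    "ys \<noteq> [] \<longrightarrow> last ys \<notin> {a, b}" "a \<noteq> b"
    "involution xs = ys @ map (swap_val b a) zs @ [b, a]"
proof -
  obtain ws1 b where "xs = ws1 @ [b]" using assms(2) by (cases xs rule: rev_cases) auto
  moreover obtain ws a where "ws1 = ws @ [a]"
    using assms(2) \<open>xs = ws1 @ [b]\<close> by (cases ws1 rule: rev_cases) auto
  ultimately have xs: "xs = ws @ [a, b]" by simp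
  obtain ys zs where ws: "ws = ys @ zs" and zs: "set zs \<subseteq> {a, b}"
    and ys: "ys \<noteq> [] \<longrightarrow> last ys \<notin> {a, b}"
    using alternating_suffix_split[of ws a b] by blast
  show ?thesis
  proof (rule that)
    show "xs = ys @ zs @ [a, b]" using xs ws by simp
    show "a \<noteq> b" using assms(1) xs by (simp add: successively_append_iff)
    show "involution xs = ys @ map (swap_val b a) zs @ [b, a]"
      using xs ws involution_append_alternating[OF zs ys] by simp
  qed (use zs ys in auto)
qed

lemma set_involution:
  assumes "successively (\<noteq>) xs" "2 \<le> length xs"
  shows "set (involution xs) = set xs"
proof -
  obtain ys zs a b where xs: "xs = ys @ zs @ [a, b]" and zs: "set zs \<subseteq> {a, b}"
    and inv: "involution xs = ys @ map (swap_val b a) zs @ [b, a]"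
    using involution_decomp[OF assms] by metis
  have "swap_val b a ` set zs \<subseteq> {a, b}" using zs swap_val_in_pair by blast
  then show ?thesis using inv xs zs by auto
qed

lemma successively_involution:
  assumes "successively (\<noteq>) xs" "2 \<le> length xs"
  shows "successively (\<noteq>) (involution xs)"
proof -
  obtain ys zs a b where xs: "xs = ys @ zs @ [a, b]" and zs: "set zs \<subseteq> {a, b}"
    and ys: "ys \<noteq> [] \<longrightarrow> last ys \<notin> {a, b}"
    and inv: "involution xs = ys @ map (swap_val b a) zs @ [b, a]"
    using involution_decomp[OF assms] by metis
  have "successively (\<noteq>) ys" and suffix: "successively (\<noteq>) (zs @ [a, b])"
    using assms(1) xs by (auto simp: successively_append_iff)
  from suffix have "successively (\<noteq>) (map (swap_val b a) (zs @ [a, b]))"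
    unfolding successively_map by (rule successively_mono) (metis swap_val_simps(3))
  moreover have "hd (map (swap_val b a) zs @ [b, a]) \<in> {a, b}"
    using zs swap_val_in_pair by (cases zs) auto
  ultimately show ?thesis
    unfolding inv using \<open>successively (\<noteq>) ys\<close> ys
    by (auto simp: successively_append_iff)
qed

lemma involution_involution:
  assumes "successively (\<noteq>) xs" "2 \<le> length xs"
  shows "involution (involution xs) = xs"
proof -
  obtain ys zs a b where xs: "xs = ys @ zs @ [a, b]" and zs: "set zs \<subseteq> {a, b}"
    and ys: "ys \<noteq> [] \<longrightarrow> last ys \<notin> {a, b}"
    and inv: "involution xs = ys @ map (swap_val b a) zs @ [b, a]"
    using involution_decomp[OF assms] by metis
  have "set (map (swap_val b a) zs) \<subseteq> {b, a}" using zs swap_val_in_pair by auto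
  moreover have "ys \<noteq> [] \<longrightarrow> last ys \<notin> {b, a}" using ys by auto
  ultimately show ?thesis
    unfolding inv by (subst involution_append_alternating) (auto simp: xs comp_def)
qed

lemma involution_in_hanoi_states:
  assumes "xs \<in> hanoi_states r k" "2 \<le> k"
  shows "involution xs \<in> hanoi_states r k"
proof -
  obtain ys zs a b where "xs = ys @ zs @ [a, b]"
    and "involution xs = ys @ map (swap_val b a) zs @ [b, a]"
    using assms involution_decomp unfolding hanoi_states_iff by metis
  then have "length (involution xs) = k" using assms by (auto simp: hanoi_states_iff)
  then show ?thesis
    using assms set_involution successively_involution unfolding hanoi_states_iff by metis
qed

lemma hanoi_move_butlast_involution:
  assumes xs: "xs \<in> hanoi_states r k" and k: "2 \<le> k"
  shows "(butlast xs, butlast (involution xs)) \<in> hanoi_game r (k - 1)"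
proof -
  have sc: "successively (\<noteq>) xs" and len: "2 \<le> length xs" and bd: "\<forall>x\<in>set xs. x \<le> r"
    using assms by (auto simp: hanoi_states_iff)
  obtain ys zs a b where xs_eq: "xs = ys @ zs @ [a, b]" and zs: "set zs \<subseteq> {a, b}"
    and ys: "ys \<noteq> [] \<longrightarrow> last ys \<notin> {a, b}" and "a \<noteq> b"
    and inv: "involution xs = ys @ map (swap_val b a) zs @ [b, a]"
    using involution_decomp[OF sc len] by metis
  have states: "butlast xs \<in> hanoi_states r (k - 1)" "butlast (involution xs) \<in> hanoi_states r (k - 1)"
    using assms involution_in_hanoi_states butlast_in_hanoi_states by blast+
  show ?thesis
  proof (cases zs rule: rev_cases)
    case Nil
    then have "butlast xs = ys @ [a]" "butlast (involution xs) = ys @ [b]"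
      using xs_eq inv by (simp_all add: butlast_append)
    then have "adjustment r (butlast xs) (butlast (involution xs))"
      unfolding adjustment_iff using \<open>a \<noteq> b\<close> ys bd xs_eq by auto
    then show ?thesis using states unfolding hanoi_move_def by auto
  next
    case (snoc zs' c)
    have "c \<noteq> a" using sc xs_eq snoc by (simp add: successively_append_iff)
    then have "c = b" using zs snoc by auto
    then have "butlast xs = ys @ zs' @ [b, a]" using xs_eq snoc by (simp add: butlast_append)
    moreover have "set zs' \<subseteq> {b, a}" "ys \<noteq> [] \<longrightarrow> last ys \<notin> {b, a}"
      using zs ys snoc by auto
    ultimately have "involution (butlast xs) = ys @ map (swap_val a b) zs' @ [a, b]"
      by (simp add: involution_append_alternating)
    then have "involution (butlast xs) = butlast (involution xs)"
      using inv snoc \<open>c = b\<close> by (simp add: butlast_append swap_val_commute)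
    moreover have "2 \<le> length (butlast xs)" using xs_eq snoc by simp
    ultimately show ?thesis using states unfolding hanoi_move_def by auto
  qed
qed

lemma hanoi_move_lifts_through_involution:
  assumes u: "u \<in> hanoi_states r (k - 1)" and k: "2 \<le> k"
    and move: "(u, u') \<in> hanoi_game r (k - 1)"
  obtains t where "u @ [t] \<in> hanoi_states r k" "butlast (involution (u @ [t])) = u'"
proof -
  have sc: "successively (\<noteq>) u" and bd: "\<forall>x\<in>set u. x \<le> r" and "u \<noteq> []"
    using u k by (auto simp: hanoi_states_iff)
  have snoc: "u @ [t] \<in> hanoi_states r k" if "t \<le> r" "t \<noteq> last u" for t
    using snoc_in_hanoi_states[OF u \<open>u \<noteq> []\<close> that] k by simp
  from move have "adjustment r u u' \<or> (2 \<le> length u \<and> u' = involution u)"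
    unfolding hanoi_move_def by auto
  then show ?thesis
  proof
    assume "adjustment r u u'"
    then obtain v where v: "v \<le> r" "v \<noteq> last u" "butlast u \<noteq> [] \<longrightarrow> v \<noteq> last (butlast u)"
      and u': "u' = butlast u @ [v]"
      unfolding adjustment_iff by auto
    have u_eq: "u = butlast u @ [last u]" using \<open>u \<noteq> []\<close> by simp
    then have "successively (\<noteq>) (butlast u @ [last u])" using sc by simp
    then have "butlast u \<noteq> [] \<longrightarrow> last (butlast u) \<noteq> last u"
      by (auto simp: successively_append_iff)
    then have "butlast u \<noteq> [] \<longrightarrow> last (butlast u) \<notin> {last u, v}" using v by auto
    then have "involution (butlast u @ [] @ [last u, v]) = butlast u @ [v, last u]"
      by (subst involution_append_alternating) auto
    then have "butlast (involution (u @ [v])) = u'"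
      using u' by (subst u_eq) (simp add: butlast_append)
    with snoc v show ?thesis using that by blast
  next
    assume "2 \<le> length u \<and> u' = involution u"
    then obtain ys zs a b where u_eq: "u = ys @ zs @ [a, b]" and zs: "set zs \<subseteq> {a, b}"
      and ys: "ys \<noteq> [] \<longrightarrow> last ys \<notin> {a, b}" and "a \<noteq> b"
      and u': "u' = ys @ map (swap_val b a) zs @ [b, a]"
      using involution_decomp[OF sc] by metis
    have "set (zs @ [a]) \<subseteq> {b, a}" "ys \<noteq> [] \<longrightarrow> last ys \<notin> {b, a}"
      using zs ys by auto
    then have "involution (ys @ (zs @ [a]) @ [b, a]) = ys @ map (swap_val a b) (zs @ [a]) @ [a, b]"
      by (rule involution_append_alternating)
    moreover have "u @ [a] = ys @ (zs @ [a]) @ [b, a]" using u_eq by simp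
    ultimately have "butlast (involution (u @ [a])) = u'"
      using u' by (simp add: butlast_append swap_val_commute)
    moreover have "a \<le> r" "a \<noteq> last u" using bd u_eq \<open>a \<noteq> b\<close> by auto
    ultimately show ?thesis using snoc that by blast
  qed
qed

section \<open>The lower bound\<close>

definition truncation :: "bool \<Rightarrow> nat list \<Rightarrow> nat list" where
  "truncation flip xs = butlast (if flip then involution xs else xs)"

lemma truncation_in_hanoi_states:
  "xs \<in> hanoi_states r k \<Longrightarrow> 2 \<le> k \<Longrightarrow> truncation flip xs \<in> hanoi_states r (k - 1)"
  unfolding truncation_def using involution_in_hanoi_states butlast_in_hanoi_states by auto

lemma set_truncation_subset:
  assumes "xs \<in> hanoi_states r k" "2 \<le> k"
  shows "set (truncation flip xs) \<subseteq> set xs"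
proof -
  have "set (involution xs) = set xs"
    using assms set_involution by (auto simp: hanoi_states_iff)
  then show ?thesis unfolding truncation_def by (auto dest: in_set_butlastD)
qed

lemma truncation_involution:
  assumes "xs \<in> hanoi_states r k" "2 \<le> k"
  shows "truncation flip (involution xs) = truncation (\<not> flip) xs"
  using assms involution_involution unfolding truncation_def hanoi_states_iff by auto

lemma hanoi_move_truncations:
  assumes "xs \<in> hanoi_states r k" "2 \<le> k"
  shows "(truncation True xs, truncation False xs) \<in> hanoi_game r (k - 1)"
proof -
  have "involution (involution xs) = xs"
    using assms involution_involution by (auto simp: hanoi_states_iff)
  then show ?thesis
    using hanoi_move_butlast_involution[OF involution_in_hanoi_states[OF assms] assms(2)]
    by (simp add: truncation_def)
qed

lemma truncation_distance_step:
  assumes k: "2 \<le> k" and move: "(c, b) \<in> hanoi_game r k"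
    and dist: "(t, truncation e c) \<in> hanoi_game r (k - 1) ^^ j"
  obtains e' j' where "(t, truncation e' b) \<in> hanoi_game r (k - 1) ^^ j'"
    "2 * j' + of_bool e' \<le> 2 * j + of_bool e + 1"
proof -
  have c: "c \<in> hanoi_states r k" using move by (rule hanoi_move_cases)
  consider "b = involution c" | "butlast b = butlast c" using move by (blast dest: hanoi_move_cases)
  then show ?thesis
  proof cases
    case 1
    then have "truncation (\<not> e) b = truncation e c" using truncation_involution[OF c k] by simp
    with dist show ?thesis by (intro that[of "\<not> e" j]) auto
  next
    case 2
    then have b: "truncation False b = truncation False c" by (simp add: truncation_def)
    show ?thesis
    proof (cases e)
      case False
      with dist b show ?thesis by (intro that[of False j]) auto
    next
      case True
      with dist b hanoi_move_truncations[OF c k]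
      have "(t, truncation False b) \<in> hanoi_game r (k - 1) ^^ Suc j"
        by (auto intro: relpow_Suc_I)
      with True show ?thesis by (intro that[of False "Suc j"]) auto
    qed
  qed
qed

text \<open>The summand \<open>1\<close> pays for the adjustment that leaves \<open>{a, involution a}\<close>, each flag for an
  involution that switches between the two truncations.\<close>

lemma reachable_truncation_distance:
  assumes k: "2 \<le> k" and a: "a \<in> hanoi_states r k"
  shows "(a, b) \<in> hanoi_game r k ^^ n \<Longrightarrow> b = a \<or> (b = involution a \<and> 1 \<le> n) \<or>
    (\<exists>s e j. (truncation s a, truncation e b) \<in> hanoi_game r (k - 1) ^^ j \<and>
       2 * j + 1 + of_bool s + of_bool e \<le> n)"
proof (induction n arbitrary: b)
  case 0
  then show ?case by simp
next
  case (Suc n)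
  then obtain c where ac: "(a, c) \<in> hanoi_game r k ^^ n" and cb: "(c, b) \<in> hanoi_game r k"
    by (blast elim: relpow_Suc_E)
  have b: "b = involution c \<or> truncation False b = truncation False c"
    using cb by (auto dest: hanoi_move_cases simp: truncation_def)
  from Suc.IH[OF ac] consider "c = a" | "c = involution a" "1 \<le> n"
    | s e j where "(truncation s a, truncation e c) \<in> hanoi_game r (k - 1) ^^ j"
        "2 * j + 1 + of_bool s + of_bool e \<le> n"
    by blast
  then show ?case
  proof cases
    case 1
    show ?thesis
    proof (cases "b = involution a")
      case False
      then have "(truncation False a, truncation False b) \<in> hanoi_game r (k - 1) ^^ 0"
        using b 1 by simp
      then show ?thesis by (intro disjI2 exI[of _ False] exI[of _ False] exI[of _ 0]) simp
    qed simp
  next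
    case 2
    have "involution (involution a) = a"
      using a k involution_involution by (auto simp: hanoi_states_iff)
    show ?thesis
    proof (cases "b = a")
      case False
      then have "(truncation True a, truncation False b) \<in> hanoi_game r (k - 1) ^^ 0"
        using b 2 \<open>involution (involution a) = a\<close> by (auto simp: truncation_def)
      then show ?thesis using 2 by (intro disjI2 exI[of _ True] exI[of _ False] exI[of _ 0]) simp
    qed simp
  next
    case 3
    obtain e' j' where "(truncation s a, truncation e' b) \<in> hanoi_game r (k - 1) ^^ j'"
      "2 * j' + of_bool e' \<le> 2 * j + of_bool e + 1"
      by (rule truncation_distance_step[OF k cb 3(1)])
    then show ?thesis using 3(2) by (intro disjI2 exI[of _ s] exI[of _ e'] exI[of _ j']) simp
  qed
qed

lemma hanoi_game_lower_bound:
  "1 \<le> k \<Longrightarrow> a \<in> hanoi_states r k \<Longrightarrow> b \<in> hanoi_states r k \<Longrightarrow> set a \<inter> set b = {} \<Longrightarrow>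
    (a, b) \<in> hanoi_game r k ^^ n \<Longrightarrow> 2 ^ k - 1 \<le> n"
proof (induction k arbitrary: a b n)
  case 0
  then show ?case by simp
next
  case (Suc k)
  have "a \<noteq> []" "b \<noteq> []" using Suc.prems by (auto simp: hanoi_states_iff)
  then have "a \<noteq> b" using Suc.prems(4) by auto
  show ?case
  proof (cases "k = 0")
    case True
    then show ?thesis using \<open>a \<noteq> b\<close> Suc.prems(5) by (cases n) auto
  next
    case False
    then have k: "2 \<le> Suc k" by simp
    have "set (involution a) = set a"
      using Suc.prems(2) k set_involution by (auto simp: hanoi_states_iff)
    then have "b \<noteq> involution a" using \<open>b \<noteq> []\<close> Suc.prems(4) by auto
    then obtain s e j where dist: "(truncation s a, truncation e b) \<in> hanoi_game r k ^^ j"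
      and n: "2 * j + 1 + of_bool s + of_bool e \<le> n"
      using reachable_truncation_distance[OF k Suc.prems(2,5)] \<open>a \<noteq> b\<close> by auto
    have "set (truncation s a) \<inter> set (truncation e b) = {}"
      using set_truncation_subset[OF Suc.prems(2) k] set_truncation_subset[OF Suc.prems(3) k]
        Suc.prems(4) by blast
    moreover have "truncation s a \<in> hanoi_states r k" "truncation e b \<in> hanoi_states r k"
      using truncation_in_hanoi_states[OF _ k] Suc.prems(2,3) by auto
    ultimately have "2 ^ k - 1 \<le> j"
      using Suc.IH[OF _ _ _ _ dist] False by simp
    with n show ?thesis by simp
  qed
qed

section \<open>The upper bound\<close>

text \<open>Restricting the first entry to \<open>F\<close> covers both games (\<open>F = - {0}\<close> gives the proper states);
  for \<open>k \<ge> 2\<close> the restriction is inherited from the prefix, so it never obstructs a lift.\<close>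

definition hanoi_states_on :: "nat set \<Rightarrow> nat \<Rightarrow> nat \<Rightarrow> nat list set" where
  "hanoi_states_on F r k = {xs \<in> hanoi_states r k. xs ! 0 \<in> F}"

abbreviation hanoi_game_on :: "nat set \<Rightarrow> nat \<Rightarrow> nat \<Rightarrow> (nat list \<times> nat list) set" where
  "hanoi_game_on F r k \<equiv> hanoi_move (hanoi_states_on F r k) r"

lemma hanoi_states_on_UNIV: "hanoi_states_on UNIV r k = hanoi_states r k"
  by (simp add: hanoi_states_on_def)

lemma hanoi_states_on_nonzero: "hanoi_states_on (- {0}) r k = proper_hanoi_states r k"
  by (auto simp: hanoi_states_on_def proper_hanoi_states_def)

lemma hanoi_game_on_subset: "hanoi_game_on F r k \<subseteq> hanoi_game r k"
  by (auto simp: hanoi_move_def hanoi_states_on_def)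

lemma relpow_hanoi_game_on_subset: "hanoi_game_on F r k ^^ n \<subseteq> hanoi_game r k ^^ n"
  by (induction n) (simp_all add: relcomp_mono hanoi_game_on_subset)

lemma hanoi_states_on_iff_butlast:
  assumes "xs \<in> hanoi_states r k" "2 \<le> k"
  shows "xs \<in> hanoi_states_on F r k \<longleftrightarrow> butlast xs \<in> hanoi_states_on F r (k - 1)"
proof -
  have "butlast xs ! 0 = xs ! 0" using assms by (simp add: hanoi_states_iff nth_butlast)
  then show ?thesis
    using assms butlast_in_hanoi_states by (auto simp: hanoi_states_on_def)
qed

lemma hanoi_game_on_lift_move:
  assumes a: "a \<in> hanoi_states_on F r k" and move: "(butlast a, u') \<in> hanoi_game_on F r (k - 1)"
  obtains x where "(a, x) \<in> (hanoi_game_on F r k)\<^sup>="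
    "(x, involution x) \<in> hanoi_game_on F r k" "butlast (involution x) = u'"
proof -
  have aH: "a \<in> hanoi_states r k" using a by (simp add: hanoi_states_on_def)
  have "butlast a \<noteq> []" using move by (rule hanoi_move_cases)
  then have "0 < length (butlast a)" by blast
  then have k: "2 \<le> k" using aH by (auto simp: hanoi_states_iff)
  have "(butlast a, u') \<in> hanoi_game r (k - 1)" using move hanoi_game_on_subset by blast
  then obtain t where "butlast a @ [t] \<in> hanoi_states r k"
    "butlast (involution (butlast a @ [t])) = u'"
    by (rule hanoi_move_lifts_through_involution[OF butlast_in_hanoi_states[OF aH k] k])
  moreover define x where "x = butlast a @ [t]"
  ultimately have xH: "x \<in> hanoi_states r k" and lift: "butlast (involution x) = u'"
    by simp_all
  have "butlast a \<in> hanoi_states_on F r (k - 1)" "u' \<in> hanoi_states_on F r (k - 1)"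
    using move by (auto dest: hanoi_move_cases)
  then have x: "x \<in> hanoi_states_on F r k" and ix: "involution x \<in> hanoi_states_on F r k"
    using hanoi_states_on_iff_butlast[OF xH k]
      hanoi_states_on_iff_butlast[OF involution_in_hanoi_states[OF xH k] k] lift
    by (simp_all add: x_def)
  have "2 \<le> length x" using xH k by (simp add: x_def hanoi_states_iff)
  then have "(x, involution x) \<in> hanoi_game_on F r k"
    using x ix by (simp add: hanoi_move_def)
  moreover have "(a, x) \<in> (hanoi_game_on F r k)\<^sup>="
  proof (cases "a = x")
    case False
    then have "adjustment r a x"
      using adjustment_if_butlast_eq[OF aH xH] k by (simp add: x_def)
    then show ?thesis using a x by (simp add: hanoi_move_def)
  qed simp
  ultimately show ?thesis using that lift by blast
qed

lemma hanoi_game_on_lift_path: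
  assumes k: "1 \<le> k" and b: "b \<in> hanoi_states_on F r k"
  shows "(butlast a, butlast b) \<in> hanoi_game_on F r (k - 1) ^^ j \<Longrightarrow>
    a \<in> hanoi_states_on F r k \<Longrightarrow> \<exists>m \<le> 2 * j + 1. (a, b) \<in> hanoi_game_on F r k ^^ m"
proof (induction j arbitrary: a)
  case 0
  have "a \<in> hanoi_states r k" "b \<in> hanoi_states r k"
    using 0 b by (auto simp: hanoi_states_on_def)
  then have "a = b \<or> adjustment r a b"
    using adjustment_if_butlast_eq k 0 by auto
  then have "(a, b) \<in> hanoi_game_on F r k ^^ 0 \<or> (a, b) \<in> hanoi_game_on F r k ^^ 1"
    using 0 b by (auto simp: hanoi_move_def)
  then show ?case by fastforce
next
  case (Suc j)
  then obtain u' where move: "(butlast a, u') \<in> hanoi_game_on F r (k - 1)"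
    and rest: "(u', butlast b) \<in> hanoi_game_on F r (k - 1) ^^ j"
    by (blast elim: relpow_Suc_E2)
  obtain x where ax: "(a, x) \<in> (hanoi_game_on F r k)\<^sup>="
    and x: "(x, involution x) \<in> hanoi_game_on F r k" and lift: "butlast (involution x) = u'"
    by (rule hanoi_game_on_lift_move[OF Suc.prems(2) move])
  have "involution x \<in> hanoi_states_on F r k" using x by (rule hanoi_move_cases)
  then obtain m where m: "m \<le> 2 * j + 1" "(involution x, b) \<in> hanoi_game_on F r k ^^ m"
    using Suc.IH rest lift by blast
  obtain i where "i \<le> 1" and ai: "(a, x) \<in> hanoi_game_on F r k ^^ i"
    using ax by (metis Un_iff pair_in_Id_conv relpow_0_I relpow_1 order_refl zero_le_one)
  have "(a, b) \<in> hanoi_game_on F r k ^^ (i + Suc m)"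
    by (rule relpow_trans[OF ai relpow_Suc_I2[OF x m(2)]])
  then show ?case using \<open>i \<le> 1\<close> m(1) by (intro exI[of _ "i + Suc m"]) simp
qed

lemma hanoi_game_on_upper_bound:
  "1 \<le> k \<Longrightarrow> a \<in> hanoi_states_on F r k \<Longrightarrow> b \<in> hanoi_states_on F r k \<Longrightarrow>
    set a \<inter> set b = {} \<Longrightarrow> \<exists>m \<le> 2 ^ k - 1. (a, b) \<in> hanoi_game_on F r k ^^ m"
proof (induction k arbitrary: a b)
  case 0
  then show ?case by simp
next
  case (Suc k)
  have aH: "a \<in> hanoi_states r (Suc k)" and bH: "b \<in> hanoi_states r (Suc k)"
    using Suc.prems by (auto simp: hanoi_states_on_def)
  have "\<exists>j \<le> 2 ^ k - 1. (butlast a, butlast b) \<in> hanoi_game_on F r k ^^ j"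
  proof (cases "k = 0")
    case True
    then have "butlast a = butlast b" using aH bH by (simp add: hanoi_states_iff butlast_conv_take)
    then show ?thesis by (intro exI[of _ 0]) simp
  next
    case False
    then have k: "2 \<le> Suc k" by simp
    have "butlast a \<in> hanoi_states_on F r k" "butlast b \<in> hanoi_states_on F r k"
      using hanoi_states_on_iff_butlast[OF aH k] hanoi_states_on_iff_butlast[OF bH k] Suc.prems
      by simp_all
    moreover have "set (butlast a) \<inter> set (butlast b) = {}"
      using Suc.prems(4) by (auto dest: in_set_butlastD)
    ultimately show ?thesis using Suc.IH False by simp
  qed
  then obtain j where "j \<le> 2 ^ k - 1" "(butlast a, butlast b) \<in> hanoi_game_on F r k ^^ j"
    by blast
  then obtain m where "m \<le> 2 * j + 1" "(a, b) \<in> hanoi_game_on F r (Suc k) ^^ m"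
    using hanoi_game_on_lift_path[of "Suc k" b F r] Suc.prems(2,3) by auto
  moreover have "2 * j + 1 \<le> 2 ^ Suc k - 1"
    using \<open>j \<le> 2 ^ k - 1\<close> one_le_power[of "2::nat" k] unfolding power_Suc by linarith
  ultimately show ?case by (intro exI[of _ m]) simp
qed

lemma min_moves_hanoi_states_on:
  assumes "1 \<le> k" "a \<in> hanoi_states_on F r k" "b \<in> hanoi_states_on F r k" "set a \<inter> set b = {}"
  shows "min_moves (hanoi_states_on F r k) r a b (2 ^ k - 1)"
proof -
  have "a \<in> hanoi_states r k" "b \<in> hanoi_states r k"
    using assms(2,3) by (simp_all add: hanoi_states_on_def)
  then have lower: "2 ^ k - 1 \<le> n" if "(a, b) \<in> hanoi_game_on F r k ^^ n" for n
    using hanoi_game_lower_bound[OF assms(1) _ _ assms(4)] relpow_hanoi_game_on_subset that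
    by blast
  obtain m where "m \<le> 2 ^ k - 1" "(a, b) \<in> hanoi_game_on F r k ^^ m"
    using hanoi_game_on_upper_bound[OF assms] by blast
  then show ?thesis
    unfolding min_moves_def using lower le_antisym leD by metis
qed

theorem lemma6:
  fixes r k :: nat
  assumes "r \<ge> 1" and "k \<ge> 1"
  shows "(\<forall>a\<in>hanoi_states r k. \<forall>b\<in>hanoi_states r k. set a \<inter> set b = {} \<longrightarrow>
            min_moves (hanoi_states r k) r a b (2 ^ k - 1))
       \<and> (\<forall>a\<in>proper_hanoi_states r k. \<forall>b\<in>proper_hanoi_states r k. set a \<inter> set b = {} \<longrightarrow>
            min_moves (proper_hanoi_states r k) r a b (2 ^ k - 1))"
  using min_moves_hanoi_states_on[OF assms(2), of _ UNIV r]
    min_moves_hanoi_states_on[OF assms(2), of _ "- {0}" r]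
  unfolding hanoi_states_on_UNIV hanoi_states_on_nonzero by blast

end
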